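(* Let $w$ be the one-sided fixed point starting with $a$ of the Fibonacci substitution, and let $n\ge1$. There exist strictly increasing sequences $(j_k)_{k\ge0}$, $(l_k)_{k\ge0}$, $(m_k)_{k\ge0}$ of even nonnegative integers such that \[C_a(X)=C_{a,R_n}(X)\sum_{k=0}^\infty X^{j_k}+C_{a,S_n}(X)\sum_{k=0}^\infty X^{l_k}+C_{a,T_n}(X)\sum_{k=0}^\infty X^{m_k}\] as formal power series (hence also for all real $X\in(-1,1)$).
   Context: The Fibonacci substitution is $\sigma(a)=ab$, $\sigma(b)=a$, extended to words by concatenation; $w=w_0w_1\ldots=\lim_{m\to\infty}\sigma^m(a)$ is its fixed point starting with $a$, and $C_a(X)=\sum_{n\ge0}1_a(w_n)X^n$. Let $A_n=\sigma^n(a)$, $B_n=\sigma^n(b)$, and $R_n=A_{3n}B_{3n}$, $S_n=A_{3n}A_{3n}$, $T_n=B_{3n}A_{3n}$ (concatenations). With Fibonacci numbers $f_1=f_2=1$, $f_{i+2}=f_{i+1}+f_i$, one has $|A_n|=f_{n+2}$, $|R_n|=|T_n|=f_{3n+3}$, $|S_n|=2f_{3n+2}$, all even. For a finite word $u=u_0\cdots u_L$, $C_{a,u}(X)=\sum_{i=0}^{L}1_a(u_i)X^i$. *)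

theory Defs
  imports "HOL-Computational_Algebra.Formal_Power_Series"
begin

datatype letter = La | Lb

fun sigma1 :: "letter \<Rightarrow> letter list" where
  "sigma1 La = [La, Lb]"
| "sigma1 Lb = [La]"

definition sigma :: "letter list \<Rightarrow> letter list" where
  "sigma u = concat (map sigma1 u)"

definition Aw :: "nat \<Rightarrow> letter list" where "Aw n = (sigma ^^ n) [La]"
definition Bw :: "nat \<Rightarrow> letter list" where "Bw n = (sigma ^^ n) [Lb]"

definition Rw :: "nat \<Rightarrow> letter list" where "Rw n = Aw (3*n) @ Bw (3*n)"
definition Sw :: "nat \<Rightarrow> letter list" where "Sw n = Aw (3*n) @ Aw (3*n)"
definition Tw :: "nat \<Rightarrow> letter list" where "Tw n = Bw (3*n) @ Aw (3*n)"

text \<open>The fixed point w = lim sigma^m(a): since sigma^m(a) is a prefix of sigma^(m+1)(a)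
  and has length f_(m+2) > m, the n-th letter of w is the n-th letter of sigma^(n+1)(a).\<close>
definition fibw :: "nat \<Rightarrow> letter" where
  "fibw n = Aw (Suc n) ! n"

definition ind_a :: "letter \<Rightarrow> real" where
  "ind_a x = (if x = La then 1 else 0)"

definition Ca :: "real fps" where
  "Ca = Abs_fps (\<lambda>i. ind_a (fibw i))"

definition Cau :: "letter list \<Rightarrow> real fps" where
  "Cau u = Abs_fps (\<lambda>i. if i < length u then ind_a (u ! i) else 0)"

text \<open>For an injective (e.g. strictly increasing) sequence j, the formal power series
  sum_k X^(j k) has coefficient 1 at exponents in the range of j and 0 elsewhere.\<close>
definition seq_series :: "(nat \<Rightarrow> nat) \<Rightarrow> real fps" where
  "seq_series j = Abs_fps (\<lambda>i. if i \<in> range j then 1 else 0)"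

end

theory Submission
  imports Defs "HOL-Library.Infinite_Set"
begin

text \<open>The fixed point satisfies \<open>w = \<sigma>\<^sup>N(w)\<close> for every \<open>N\<close>. Cut \<open>w\<close> into the two-letter
  blocks \<open>w(2k) w(2k+1)\<close>; as \<open>bb\<close> never occurs, each block is \<open>ab\<close>, \<open>aa\<close> or \<open>ba\<close>, and \<open>\<sigma>\<^sup>3\<^sup>n\<close>
  maps these to \<open>R_n\<close>, \<open>S_n\<close>, \<open>T_n\<close>. Hence \<open>w\<close> is a concatenation of copies of \<open>R_n\<close>, \<open>S_n\<close>,
  \<open>T_n\<close>, and the exponents \<open>j_k\<close>, \<open>l_k\<close>, \<open>m_k\<close> are the starting positions of the respective
  copies. These are even because \<open>|A_3n|\<close> and \<open>|B_3n|\<close> are odd, and each block type recurs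
  infinitely often because \<open>w\<close> begins with \<open>A_(m+1) A_m\<close> for every \<open>m\<close>.\<close>

lemma strict_mono_interval_exists:
  fixes P :: "nat \<Rightarrow> nat"
  assumes "strict_mono P" "P 0 \<le> p"
  shows "\<exists>k. P k \<le> p \<and> p < P (Suc k)"
proof -
  have "p < P (Suc p)" using strict_mono_imp_increasing[OF assms(1), of "Suc p"] by simp
  then have least: "p < P (LEAST i. p < P i)" by (rule LeastI)
  then obtain k where k: "(LEAST i. p < P i) = Suc k"
    using assms(2) by (metis not0_implies_Suc not_less)
  then have "\<not> p < P k" by (metis lessI not_less_Least)
  then show ?thesis using least k by (auto simp: not_less)
qed

lemma strict_mono_interval_unique:
  fixes P :: "nat \<Rightarrow> nat"
  assumes "strict_mono P" "P k \<le> p" "p < P (Suc k)" "P k' \<le> p" "p < P (Suc k')"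
  shows "k = k'"
  using assms strict_mono_less_eq[OF assms(1), of "Suc k" k']
    strict_mono_less_eq[OF assms(1), of "Suc k'" k]
  by (metis Suc_leI le_less_trans linorder_neqE_nat not_le)

text \<open>Multiplying \<open>Cau u\<close> by \<open>seq_series s\<close> places a copy of \<open>u\<close> at every position \<open>s k\<close>.
  Since these positions start intervals \<open>[P k, P (Suc k))\<close> of length \<open>length u\<close>, the copies do
  not overlap and each coefficient receives at most one contribution.\<close>

lemma fps_nth_Cau_times_seq_series:
  fixes P :: "nat \<Rightarrow> nat"
  assumes P: "strict_mono P" and s: "range s = P ` K"
    and K: "\<And>k. k \<in> K \<Longrightarrow> P (Suc k) = P k + length u"
    and p: "P k \<le> p" "p < P (Suc k)"
  shows "fps_nth (Cau u * seq_series s) p = (if k \<in> K then ind_a (u ! (p - P k)) else 0)"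
proof -
  define f where
    "f t = (if t < length u then ind_a (u ! t) else 0) * (if p - t \<in> P ` K then 1 else 0)" for t
  have f: "f t = (if t = p - P k then (if k \<in> K then ind_a (u ! (p - P k)) else 0) else 0)"
    if "t \<le> p" for t
  proof (cases "t = p - P k")
    case True
    then have "p - t = P k" using p by simp
    moreover have "k \<in> K \<Longrightarrow> t < length u" using K True p by fastforce
    ultimately show ?thesis using True strict_mono_eq[OF P] by (auto simp: f_def)
  next
    case False
    have "f t = 0"
    proof (rule ccontr)
      assume "f t \<noteq> 0"
      then obtain k' where k': "k' \<in> K" "p - t = P k'" and "t < length u"
        by (auto simp: f_def split: if_splits)
      then have "P k' \<le> p" "p < P (Suc k')" using K \<open>t \<le> p\<close> by auto
      then have "k' = k" using strict_mono_interval_unique[OF P] p by blast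
      then show False using False k' \<open>t \<le> p\<close> by simp
    qed
    then show ?thesis using False by simp
  qed
  have "fps_nth (Cau u * seq_series s) p = (\<Sum>t=0..p. f t)"
    by (simp add: fps_mult_nth Cau_def seq_series_def s f_def)
  also have "\<dots> = (\<Sum>t=0..p. if t = p - P k
      then (if k \<in> K then ind_a (u ! (p - P k)) else 0) else 0)"
    using f by (intro sum.cong) auto
  finally show ?thesis by simp
qed

lemma sigma_Nil [simp]: "sigma [] = []"
  by (simp add: sigma_def)

lemma sigma_append [simp]: "sigma (u @ v) = sigma u @ sigma v"
  by (simp add: sigma_def)

lemma sigma_power_append: "(sigma ^^ N) (u @ v) = (sigma ^^ N) u @ (sigma ^^ N) v"
  by (induction N) auto

lemma sigma_power_Nil [simp]: "(sigma ^^ N) [] = []"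
  by (induction N) auto

lemma sigma_power_Cons: "(sigma ^^ N) (x # u) = (sigma ^^ N) [x] @ (sigma ^^ N) u"
  using sigma_power_append[of N "[x]" u] by simp

lemma sigma_power_La: "(sigma ^^ N) [La] = Aw N"
  by (simp add: Aw_def)

lemma sigma_power_Lb: "(sigma ^^ N) [Lb] = Bw N"
  by (simp add: Bw_def)

lemma Aw_0 [simp]: "Aw 0 = [La]"
  by (simp add: Aw_def)

lemma Bw_0 [simp]: "Bw 0 = [Lb]"
  by (simp add: Bw_def)

lemma Aw_add: "Aw (N + M) = (sigma ^^ N) (Aw M)"
  by (simp add: Aw_def funpow_add)

lemma Aw_Suc: "Aw (Suc m) = Aw m @ Bw m"
proof -
  have "Aw (Suc m) = (sigma ^^ m) (sigma [La])"
    by (simp add: Aw_def funpow_Suc_right del: funpow.simps)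
  also have "\<dots> = Aw m @ Bw m"
    using sigma_power_Cons[of m La "[Lb]"] by (simp add: sigma_def sigma_power_La sigma_power_Lb)
  finally show ?thesis .
qed

lemma Bw_Suc: "Bw (Suc m) = Aw m"
  by (simp add: Bw_def Aw_def funpow_Suc_right sigma_def del: funpow.simps)

lemma length_Aw_Bw_ge: "Suc m \<le> length (Aw m) \<and> 1 \<le> length (Bw m)"
  by (induction m) (auto simp: Aw_Suc Bw_Suc)

lemma length_Aw_ge: "Suc m \<le> length (Aw m)"
  using length_Aw_Bw_ge by blast

lemma length_sigma_power_singleton_pos: "0 < length ((sigma ^^ N) [x])"
  using length_Aw_Bw_ge[of N] by (cases x) (auto simp: sigma_power_La sigma_power_Lb)

lemma Aw_prefix: "m \<le> m' \<Longrightarrow> \<exists>t. Aw m' = Aw m @ t"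
proof (induction m' rule: dec_induct)
  case (step k)
  then show ?case by (auto simp: Aw_Suc)
qed simp

lemma fibw_Aw:
  assumes "i < length (Aw m)"
  shows "fibw i = Aw m ! i"
proof (cases "m \<le> Suc i")
  case True
  then obtain t where "Aw (Suc i) = Aw m @ t" using Aw_prefix by blast
  then show ?thesis using assms by (simp add: fibw_def nth_append)
next
  case False
  then obtain t where t: "Aw m = Aw (Suc i) @ t" using Aw_prefix[of "Suc i" m] by auto
  have "i < length (Aw (Suc i))" using length_Aw_ge[of "Suc i"] by simp
  then show ?thesis using t by (simp add: fibw_def nth_append)
qed

lemma take_Aw: "k \<le> length (Aw m) \<Longrightarrow> take k (Aw m) = map fibw [0..<k]"
  by (rule nth_equalityI) (simp_all add: fibw_Aw[of _ m])

lemma odd_length_Aw_Bw_3: "odd (length (Aw (3 * n))) \<and> odd (length (Bw (3 * n)))"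
proof (induction n)
  case (Suc n)
  have "3 * Suc n = Suc (Suc (Suc (3 * n)))" by simp
  then show ?case using Suc by (simp only:) (simp add: Aw_Suc Bw_Suc)
qed simp

lemma even_length_sigma_power_3: "even (length ((sigma ^^ (3 * n)) u)) \<longleftrightarrow> even (length u)"
proof (induction u)
  case (Cons x u)
  have "length ((sigma ^^ (3 * n)) (x # u))
      = length ((sigma ^^ (3 * n)) [x]) + length ((sigma ^^ (3 * n)) u)"
    by (simp add: sigma_power_Cons[of _ x u])
  then show ?case using Cons odd_length_Aw_Bw_3[of n]
    by (cases x) (simp_all add: sigma_power_La sigma_power_Lb)
qed simp

definition bb_free :: "letter list \<Rightarrow> bool" where
  "bb_free u \<longleftrightarrow> (\<forall>i. Suc i < length u \<longrightarrow> u ! i = Lb \<longrightarrow> u ! Suc i = La)"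

lemma bb_free_append:
  assumes "bb_free u" "bb_free v" "v = [] \<or> hd v = La"
  shows "bb_free (u @ v)"
  unfolding bb_free_def
proof (intro allI impI)
  fix i
  assume i: "Suc i < length (u @ v)" "(u @ v) ! i = Lb"
  consider "Suc i < length u" | "Suc i = length u" | "length u \<le> i" by linarith
  then show "(u @ v) ! Suc i = La"
  proof cases
    case 1
    then show ?thesis using assms(1) i by (simp add: bb_free_def nth_append)
  next
    case 2
    then show ?thesis using assms(3) i by (auto simp: nth_append hd_conv_nth)
  next
    case 3
    then show ?thesis using assms(2) i
      by (auto simp: bb_free_def nth_append Suc_diff_le)
  qed
qed

lemma bb_free_sigma: "bb_free (sigma u)"
proof (induction u)
  case Nil
  then show ?case by (simp add: bb_free_def)
next
  case (Cons x u)
  have "bb_free (sigma1 x)" by (cases x) (auto simp: bb_free_def less_Suc_eq)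
  moreover have "sigma u = [] \<or> hd (sigma u) = La"
    by (cases u; cases "hd u") (auto simp: sigma_def)
  ultimately show ?case using Cons bb_free_append by (simp add: sigma_def)
qed

lemma fibw_Lb_imp_Suc_La:
  assumes "fibw i = Lb"
  shows "fibw (Suc i) = La"
proof -
  have len: "Suc i < length (Aw (Suc (Suc i)))" using length_Aw_ge[of "Suc (Suc i)"] by simp
  have "bb_free (Aw (Suc (Suc i)))" using bb_free_sigma by (simp add: Aw_def)
  then show ?thesis
    using assms len fibw_Aw[of i "Suc (Suc i)"] fibw_Aw[of "Suc i" "Suc (Suc i)"]
    by (simp add: bb_free_def)
qed

lemma fibw_shift_Aw:
  assumes "c < length (Aw m)"
  shows "fibw (length (Aw (Suc m)) + c) = fibw c"
proof -
  have A: "Aw (Suc (Suc m)) = Aw (Suc m) @ Aw m" by (simp add: Aw_Suc Bw_Suc)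
  then have "fibw (length (Aw (Suc m)) + c) = Aw m ! c"
    using assms fibw_Aw[of _ "Suc (Suc m)"] by (simp add: nth_append)
  then show ?thesis using assms by (simp add: fibw_Aw)
qed

lemma fibw_prefix_abaaba:
  "fibw 0 = La \<and> fibw 1 = Lb \<and> fibw 2 = La \<and> fibw 3 = La \<and> fibw 4 = Lb \<and> fibw 5 = La"
  by (simp add: fibw_def Aw_Suc Bw_Suc numeral_eq_Suc)

definition pair_set :: "letter \<Rightarrow> letter \<Rightarrow> nat set" where
  "pair_set x y = {k. fibw (2 * k) = x \<and> fibw (Suc (2 * k)) = y}"

lemma infinite_pair_set: "infinite (pair_set (fibw (2 * c)) (fibw (Suc (2 * c))))"
  unfolding infinite_nat_iff_unbounded_le
proof
  fix m
  define q where "q = m + c + 1"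
  define e where "e = length (Aw (Suc (3 * q)))"
  have "even e"
    using odd_length_Aw_Bw_3[of q] by (simp add: e_def Aw_Suc)
  then have e_half: "2 * (e div 2) = e" by simp
  have len: "Suc (2 * c) < length (Aw (3 * q))" using length_Aw_ge[of "3 * q"] by (simp add: q_def)
  have "fibw (e + 2 * c) = fibw (2 * c)" "fibw (e + Suc (2 * c)) = fibw (Suc (2 * c))"
    using len fibw_shift_Aw[of "2 * c"] fibw_shift_Aw[of "Suc (2 * c)"] by (simp_all add: e_def)
  moreover have "m \<le> e div 2 + c"
    using length_Aw_ge[of "Suc (3 * q)"] by (simp add: e_def q_def)
  ultimately show "\<exists>k\<ge>m. k \<in> pair_set (fibw (2 * c)) (fibw (Suc (2 * c)))"
    unfolding pair_set_def by (intro exI[of _ "e div 2 + c"]) (simp add: e_half)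
qed

definition block_start :: "nat \<Rightarrow> nat \<Rightarrow> nat" where
  "block_start N k = length ((sigma ^^ N) (map fibw [0..<2 * k]))"

definition pair_block :: "nat \<Rightarrow> nat \<Rightarrow> letter list" where
  "pair_block N k = (sigma ^^ N) [fibw (2 * k), fibw (Suc (2 * k))]"

lemma block_start_0 [simp]: "block_start N 0 = 0"
  by (simp add: block_start_def)

lemma block_start_Suc: "block_start N (Suc k) = block_start N k + length (pair_block N k)"
proof -
  have "[0..<2 * Suc k] = [0..<2 * k] @ [2 * k, Suc (2 * k)]" by simp
  then show ?thesis
    by (simp add: block_start_def pair_block_def sigma_power_append)
qed

lemma strict_mono_block_start: "strict_mono (block_start N)"
  unfolding strict_mono_Suc_iff block_start_Suc pair_block_def
  using length_sigma_power_singleton_pos by (simp add: sigma_power_Cons[of N _ "[_]"])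

lemma even_block_start: "even (block_start (3 * n) k)"
  by (simp add: block_start_def even_length_sigma_power_3)

text \<open>Since \<open>w = \<sigma>\<^sup>N(w)\<close>, the prefix \<open>\<sigma>\<^sup>N(w(0) \<dots> w(2k-1))\<close> of \<open>w\<close> is followed by the
  block \<open>\<sigma>\<^sup>N(w(2k) w(2k+1))\<close>.\<close>

lemma fibw_block_start_add:
  assumes "q < length (pair_block N k)"
  shows "fibw (block_start N k + q) = pair_block N k ! q"
proof -
  define M where "M = Suc (Suc (2 * k))"
  have "M \<le> length (Aw M)" using length_Aw_ge[of M] by simp
  then have "take M (Aw M) = map fibw [0..<2 * k] @ [fibw (2 * k), fibw (Suc (2 * k))]"
    by (simp add: take_Aw M_def)
  then have "Aw M = map fibw [0..<2 * k] @ [fibw (2 * k), fibw (Suc (2 * k))] @ drop M (Aw M)"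
    by (metis append_take_drop_id append.assoc)
  then have "Aw (N + M)
      = (sigma ^^ N) (map fibw [0..<2 * k]) @ pair_block N k @ (sigma ^^ N) (drop M (Aw M))"
    by (metis Aw_add sigma_power_append pair_block_def)
  then show ?thesis
    using assms fibw_Aw[of "block_start N k + q" "N + M"] by (simp add: block_start_def nth_append)
qed

lemma fps_nth_Ca_block:
  assumes "block_start N k \<le> p" "p < block_start N (Suc k)"
  shows "fps_nth Ca p = ind_a (pair_block N k ! (p - block_start N k))"
  using assms fibw_block_start_add[of "p - block_start N k" N k]
  by (simp add: Ca_def block_start_Suc)

definition pair_positions :: "nat \<Rightarrow> letter \<Rightarrow> letter \<Rightarrow> nat \<Rightarrow> nat" where
  "pair_positions N x y = block_start N \<circ> enumerate (pair_set x y)"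

lemma strict_mono_pair_positions:
  "infinite (pair_set x y) \<Longrightarrow> strict_mono (pair_positions N x y)"
  by (simp add: pair_positions_def strict_mono_o strict_mono_block_start strict_mono_enumerate)

lemma even_pair_positions: "even (pair_positions (3 * n) x y k)"
  by (simp add: pair_positions_def even_block_start)

lemma fps_nth_pair_series:
  assumes "infinite (pair_set x y)" "block_start N k \<le> p" "p < block_start N (Suc k)"
  shows "fps_nth (Cau ((sigma ^^ N) [x, y]) * seq_series (pair_positions N x y)) p
    = (if k \<in> pair_set x y then ind_a (pair_block N k ! (p - block_start N k)) else 0)"
proof -
  have block: "pair_block N k' = (sigma ^^ N) [x, y]" if "k' \<in> pair_set x y" for k'
    using that by (simp add: pair_block_def pair_set_def)
  have "range (pair_positions N x y) = block_start N ` pair_set x y"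
    using range_enumerate[OF assms(1)] unfolding pair_positions_def by (metis image_comp)
  from fps_nth_Cau_times_seq_series[OF strict_mono_block_start this _ assms(2,3)]
  show ?thesis by (simp add: block block_start_Suc)
qed

theorem proposition5p6:
  fixes n :: nat
  assumes "n \<ge> 1"
  shows "\<exists>j l m :: nat \<Rightarrow> nat.
           strict_mono j \<and> strict_mono l \<and> strict_mono m \<and>
           (\<forall>k. even (j k) \<and> even (l k) \<and> even (m k)) \<and>
           Ca = Cau (Rw n) * seq_series j + Cau (Sw n) * seq_series l
                + Cau (Tw n) * seq_series m"
proof -
  define N where "N = 3 * n"
  have inf: "infinite (pair_set La Lb)" "infinite (pair_set La La)" "infinite (pair_set Lb La)"
    using infinite_pair_set[of 0] infinite_pair_set[of 1] infinite_pair_set[of 2]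
    by (simp_all add: fibw_prefix_abaaba flip: One_nat_def)
  have words: "(sigma ^^ N) [La, Lb] = Rw n" "(sigma ^^ N) [La, La] = Sw n"
    "(sigma ^^ N) [Lb, La] = Tw n"
    by (simp_all add: N_def Rw_def Sw_def Tw_def sigma_power_Cons[of _ _ "[_]"]
        sigma_power_La sigma_power_Lb)
  have "Ca = Cau (Rw n) * seq_series (pair_positions N La Lb)
      + Cau (Sw n) * seq_series (pair_positions N La La)
      + Cau (Tw n) * seq_series (pair_positions N Lb La)"
  proof (rule fps_ext)
    fix p
    obtain k where k: "block_start N k \<le> p" "p < block_start N (Suc k)"
      using strict_mono_interval_exists[OF strict_mono_block_start] by auto
    show "fps_nth Ca p = fps_nth (Cau (Rw n) * seq_series (pair_positions N La Lb)
        + Cau (Sw n) * seq_series (pair_positions N La La)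
        + Cau (Tw n) * seq_series (pair_positions N Lb La)) p"
      using fps_nth_pair_series[OF inf(1) k] fps_nth_pair_series[OF inf(2) k]
        fps_nth_pair_series[OF inf(3) k] fps_nth_Ca_block[OF k] fibw_Lb_imp_Suc_La[of "2 * k"]
      by (cases "fibw (2 * k)"; cases "fibw (Suc (2 * k))") (auto simp: words pair_set_def)
  qed
  then show ?thesis
    using strict_mono_pair_positions[OF inf(1)] strict_mono_pair_positions[OF inf(2)]
      strict_mono_pair_positions[OF inf(3)] even_pair_positions
    unfolding N_def by blast
qed

end
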